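(* For all integers $k,n$ with $n\geq 3$ and $2\leq k\leq n$, $\mathrm{ldim}_f(K_k\square K_n)=\frac{n}{2}$.
   Context: $K_k$ denotes the complete graph on $k$ vertices; $d$ is the shortest-path distance. For an edge $uv$ of a connected graph $X$, $L_X(uv)=\{x\in V(X): d_X(u,x)\neq d_X(v,x)\}$. A function $f:V(X)\to[0,1]$ is a local resolving function of $X$ if $\sum_{x\in L_X(uv)}f(x)\geq 1$ for every edge $uv$; $\mathrm{ldim}_f(X)$ is the minimum of $\sum_{v}f(v)$ over all local resolving functions. The Cartesian product $G\square H$ has vertex set $V(G)\times V(H)$, with $(u_1,v_1)$ adjacent to $(u_2,v_2)$ iff ($u_1u_2\in E(G)$ and $v_1=v_2$) or ($u_1=u_2$ and $v_1v_2\in E(H)$). *)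

theory Defs
  imports Complex_Main
begin

text \<open>A graph is given by a vertex set V and a symmetric adjacency relation E.\<close>

inductive walk_len :: "'a set \<Rightarrow> ('a \<Rightarrow> 'a \<Rightarrow> bool) \<Rightarrow> 'a \<Rightarrow> 'a \<Rightarrow> nat \<Rightarrow> bool"
  for V E where
  walk_nil: "u \<in> V \<Longrightarrow> walk_len V E u u 0"
| walk_step: "u \<in> V \<Longrightarrow> E u w \<Longrightarrow> walk_len V E w v m \<Longrightarrow> walk_len V E u v (Suc m)"

text \<open>Shortest-path distance (meaningful for connected graphs).\<close>
definition gdist :: "'a set \<Rightarrow> ('a \<Rightarrow> 'a \<Rightarrow> bool) \<Rightarrow> 'a \<Rightarrow> 'a \<Rightarrow> nat" where
  "gdist V E u v = (LEAST m. walk_len V E u v m)"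

definition connected_graph :: "'a set \<Rightarrow> ('a \<Rightarrow> 'a \<Rightarrow> bool) \<Rightarrow> bool" where
  "connected_graph V E \<longleftrightarrow> (\<forall>u\<in>V. \<forall>v\<in>V. \<exists>m. walk_len V E u v m)"

definition K_verts :: "nat \<Rightarrow> nat set" where "K_verts k = {0..<k}"
definition K_adj :: "nat \<Rightarrow> nat \<Rightarrow> bool" where "K_adj i j \<longleftrightarrow> i \<noteq> j"

definition cart_verts :: "'a set \<Rightarrow> 'b set \<Rightarrow> ('a \<times> 'b) set" where
  "cart_verts VG VH = VG \<times> VH"
definition cart_adj :: "('a \<Rightarrow> 'a \<Rightarrow> bool) \<Rightarrow> ('b \<Rightarrow> 'b \<Rightarrow> bool) \<Rightarrow> 'a \<times> 'b \<Rightarrow> 'a \<times> 'b \<Rightarrow> bool" where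
  "cart_adj EG EH p q \<longleftrightarrow>
     (EG (fst p) (fst q) \<and> snd p = snd q) \<or> (fst p = fst q \<and> EH (snd p) (snd q))"

definition resolving_set_edge :: "'a set \<Rightarrow> ('a \<Rightarrow> 'a \<Rightarrow> bool) \<Rightarrow> 'a \<Rightarrow> 'a \<Rightarrow> 'a set" where
  "resolving_set_edge V E u v = {x \<in> V. gdist V E u x \<noteq> gdist V E v x}"

definition local_resolving_function :: "'a set \<Rightarrow> ('a \<Rightarrow> 'a \<Rightarrow> bool) \<Rightarrow> ('a \<Rightarrow> real) \<Rightarrow> bool" where
  "local_resolving_function V E f \<longleftrightarrow>
     (\<forall>x\<in>V. 0 \<le> f x \<and> f x \<le> 1) \<and>
     (\<forall>u\<in>V. \<forall>v\<in>V. E u v \<longrightarrow> (\<Sum>x\<in>resolving_set_edge V E u v. f x) \<ge> 1)"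

definition ldim_f :: "'a set \<Rightarrow> ('a \<Rightarrow> 'a \<Rightarrow> bool) \<Rightarrow> real" where
  "ldim_f V E = Inf {(\<Sum>x\<in>V. f x) | f. local_resolving_function V E f}"

end

theory Submission
  imports Defs
begin

text \<open>Distances in \<open>K_k \<box> K_n\<close> are Hamming distances of the coordinate pairs. Hence the
  edge \<open>(a,b)(a,b')\<close> is resolved exactly by the two columns \<open>b, b'\<close> and the edge \<open>(a,b)(a',b)\<close>
  exactly by the two rows \<open>a, a'\<close>. The uniform weight \<open>1/(2k)\<close> resolves every edge when
  \<open>k \<le> n\<close> and has total weight \<open>n/2\<close>. Conversely, the column weights \<open>C b\<close> of any local
  resolving function satisfy \<open>C b + C b' \<ge> 1\<close> for all \<open>b \<noteq> b'\<close>, and summing these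
  inequalities over all ordered pairs gives \<open>\<Sum>b C b \<ge> n/2\<close>.\<close>

definition hamming_dist :: "'a \<times> 'b \<Rightarrow> 'a \<times> 'b \<Rightarrow> nat" where
  "hamming_dist p q = (if fst p = fst q then 0 else 1) + (if snd p = snd q then 0 else 1)"

lemma walk_len_0_eq: "walk_len V E u v 0 \<Longrightarrow> u = v"
  by (erule walk_len.cases) auto

lemma walk_len_1_adj: "walk_len V E u v (Suc 0) \<Longrightarrow> E u v"
  by (erule walk_len.cases) (auto dest: walk_len_0_eq)

lemma walk_len_hamming:
  assumes u: "u \<in> A \<times> B" and x: "x \<in> A \<times> B"
  shows "walk_len (A \<times> B) (cart_adj K_adj K_adj) u x (hamming_dist u x)"
proof -
  let ?V = "A \<times> B" and ?E = "cart_adj K_adj K_adj"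
  obtain a b c d where ab: "u = (a,b)" and cd: "x = (c,d)" by fastforce
  have to_x: "walk_len ?V ?E (c,y) x (if y = d then 0 else 1)" if "y \<in> B" for y
    using that x cd
    by (auto simp: cart_adj_def K_adj_def intro!: walk_nil walk_step)
  show ?thesis
  proof (cases "a = c")
    case True
    then show ?thesis using to_x u ab cd by (auto simp: hamming_dist_def)
  next
    case False
    have "(a,d) \<in> ?V" "?E (a,d) (c,d)" using u x ab cd False
      by (auto simp: cart_adj_def K_adj_def)
    then have from_ad: "walk_len ?V ?E (a,d) x 1"
      using to_x[of d] cd x by (auto intro: walk_step)
    show ?thesis
    proof (cases "b = d")
      case True
      then show ?thesis using from_ad False ab cd by (simp add: hamming_dist_def)
    next
      case False
      have "?E u (a,d)" using False ab cd by (simp add: cart_adj_def K_adj_def)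
      then have "walk_len ?V ?E u x 2"
        using walk_step[OF u _ from_ad] by (simp add: numeral_2_eq_2)
      then show ?thesis using \<open>a \<noteq> c\<close> False ab cd
        by (simp add: hamming_dist_def numeral_2_eq_2)
    qed
  qed
qed

lemma hamming_dist_le_walk_len:
  assumes "walk_len V (cart_adj K_adj K_adj) u x m"
  shows "hamming_dist u x \<le> m"
proof -
  have "hamming_dist u x \<le> 2" by (simp add: hamming_dist_def)
  moreover have "hamming_dist u x \<le> m" if "m = 0"
    using that assms walk_len_0_eq by (fastforce simp: hamming_dist_def)
  moreover have "hamming_dist u x \<le> m" if "m = 1"
    using that walk_len_1_adj[of V "cart_adj K_adj K_adj" u x] assms
    by (auto simp: hamming_dist_def cart_adj_def K_adj_def)
  ultimately show ?thesis by linarith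
qed

lemma gdist_cart_complete:
  assumes "u \<in> A \<times> B" and "x \<in> A \<times> B"
  shows "gdist (A \<times> B) (cart_adj K_adj K_adj) u x = hamming_dist u x"
  unfolding gdist_def
  by (rule Least_equality)
     (use assms walk_len_hamming hamming_dist_le_walk_len in blast)+

lemma resolving_set_edge_same_row:
  assumes "a \<in> A" "b \<in> B" "b' \<in> B" "b \<noteq> b'"
  shows "resolving_set_edge (A \<times> B) (cart_adj K_adj K_adj) (a,b) (a,b') = A \<times> {b,b'}"
  using assms
  by (auto simp: resolving_set_edge_def gdist_cart_complete hamming_dist_def split: if_splits)

lemma resolving_set_edge_same_column:
  assumes "a \<in> A" "a' \<in> A" "a \<noteq> a'" "b \<in> B"
  shows "resolving_set_edge (A \<times> B) (cart_adj K_adj K_adj) (a,b) (a',b) = {a,a'} \<times> B"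
  using assms
  by (auto simp: resolving_set_edge_def gdist_cart_complete hamming_dist_def split: if_splits)

lemma sum_ge_half_card_if_pair_sums_ge_1:
  fixes C :: "'a \<Rightarrow> real"
  assumes S: "finite S" "card S \<ge> 2"
    and pair: "\<And>b b'. b \<in> S \<Longrightarrow> b' \<in> S \<Longrightarrow> b \<noteq> b' \<Longrightarrow> C b + C b' \<ge> 1"
  shows "sum C S \<ge> real (card S) / 2"
proof -
  let ?n = "real (card S)" and ?T = "sum C S"
  have row: "(\<Sum>b'\<in>S - {b}. C b + C b') = (?n - 2) * C b + ?T" if "b \<in> S" for b
  proof -
    have "(\<Sum>b'\<in>S - {b}. C b + C b') = (?n - 1) * C b + (?T - C b)"
      using that S by (simp add: sum.distrib sum_diff1 of_nat_diff)
    then show ?thesis by (simp add: algebra_simps)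
  qed
  have "?n * (?n - 1) = (\<Sum>b\<in>S. \<Sum>b'\<in>S - {b}. (1::real))"
    using S by (simp add: of_nat_diff)
  also have "\<dots> \<le> (\<Sum>b\<in>S. \<Sum>b'\<in>S - {b}. C b + C b')"
    by (intro sum_mono) (auto intro: pair)
  also have "\<dots> = (\<Sum>b\<in>S. (?n - 2) * C b + ?T)"
    using row by (rule sum.cong[OF refl])
  also have "\<dots> = (?n - 2) * ?T + ?n * ?T"
    by (simp add: sum.distrib sum_distrib_left)
  also have "\<dots> = (2 * ?n - 2) * ?T"
    by (simp add: algebra_simps)
  finally have "0 \<le> (?n - 1) * (2 * ?T - ?n)" by (simp add: algebra_simps)
  moreover have "?n - 1 > 0" using S by simp
  ultimately show ?thesis by (simp add: zero_le_mult_iff)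
qed

lemma local_resolving_function_uniform:
  assumes A: "finite A" "card A \<ge> 1" and B: "finite B" "card A \<le> card B"
  shows "local_resolving_function (A \<times> B) (cart_adj K_adj K_adj) (\<lambda>_. 1 / (2 * real (card A)))"
proof -
  let ?E = "cart_adj K_adj K_adj" and ?w = "1 / (2 * real (card A))"
  have pos: "real (card A) \<ge> 1" using A by simp
  have resolves: "1 \<le> (\<Sum>x\<in>resolving_set_edge (A \<times> B) ?E u v. ?w)"
    if uv: "u \<in> A \<times> B" "v \<in> A \<times> B" "?E u v" for u v
  proof -
    obtain a b a' b' where u: "u = (a,b)" and v: "v = (a',b')" by fastforce
    have mem: "a \<in> A" "a' \<in> A" "b \<in> B" "b' \<in> B" using uv u v by auto
    have edge: "(a \<noteq> a' \<and> b = b') \<or> (a = a' \<and> b \<noteq> b')"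
      using uv(3) u v by (auto simp: cart_adj_def K_adj_def)
    from edge show ?thesis
    proof
      assume "a \<noteq> a' \<and> b = b'"
      then have "resolving_set_edge (A \<times> B) ?E u v = {a,a'} \<times> B"
        using resolving_set_edge_same_column mem u v by blast
      moreover have "card ({a,a'} \<times> B) = 2 * card B"
        using \<open>a \<noteq> a' \<and> b = b'\<close> B by (simp add: card_cartesian_product)
      moreover have "real (card B) / real (card A) \<ge> 1" using B pos by simp
      ultimately show ?thesis by simp
    next
      assume "a = a' \<and> b \<noteq> b'"
      then have "resolving_set_edge (A \<times> B) ?E u v = A \<times> {b,b'}"
        using resolving_set_edge_same_row mem u v by blast
      moreover have "card (A \<times> {b,b'}) = 2 * card A"
        using \<open>a = a' \<and> b \<noteq> b'\<close> by (simp add: card_cartesian_product)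
      ultimately show ?thesis using pos by simp
    qed
  qed
  show ?thesis
    unfolding local_resolving_function_def
    by (intro conjI ballI impI resolves) (use pos in simp_all)
qed

lemma local_resolving_function_sum_ge:
  assumes f: "local_resolving_function (A \<times> B) (cart_adj K_adj K_adj) f"
    and A: "A \<noteq> {}" "finite A" and B: "finite B" "card B \<ge> 2"
  shows "(\<Sum>x\<in>A \<times> B. f x) \<ge> real (card B) / 2"
proof -
  let ?E = "cart_adj K_adj K_adj"
  define C where "C b = (\<Sum>a\<in>A. f (a,b))" for b
  obtain a0 where a0: "a0 \<in> A" using A by blast
  have "C b + C b' \<ge> 1" if "b \<in> B" "b' \<in> B" "b \<noteq> b'" for b b'
  proof -
    have "?E (a0,b) (a0,b')" using that by (simp add: cart_adj_def K_adj_def)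
    then have "1 \<le> sum f (resolving_set_edge (A \<times> B) ?E (a0,b) (a0,b'))"
      using f a0 that unfolding local_resolving_function_def by blast
    also have "\<dots> = sum f (A \<times> {b,b'})"
      using resolving_set_edge_same_row a0 that by metis
    also have "\<dots> = (\<Sum>a\<in>A. \<Sum>y\<in>{b,b'}. f (a,y))"
      by (simp add: sum.cartesian_product)
    also have "\<dots> = C b + C b'"
      using that by (simp add: C_def sum.distrib)
    finally show ?thesis .
  qed
  then have "real (card B) / 2 \<le> sum C B"
    using sum_ge_half_card_if_pair_sums_ge_1 B by blast
  also have "\<dots> = (\<Sum>a\<in>A. \<Sum>b\<in>B. f (a,b))"
    unfolding C_def by (rule sum.swap)
  also have "\<dots> = (\<Sum>x\<in>A \<times> B. f x)"
    by (simp add: sum.cartesian_product)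
  finally show ?thesis .
qed

theorem theorem3p14:
  fixes k n :: nat
  assumes "n \<ge> 3" and "2 \<le> k" and "k \<le> n"
  shows "ldim_f (cart_verts (K_verts k) (K_verts n)) (cart_adj K_adj K_adj) = real n / 2"
proof -
  let ?V = "{0..<k} \<times> {0..<n}" and ?E = "cart_adj K_adj K_adj"
  let ?w = "\<lambda>_. 1 / (2 * real k)"
  have uniform: "local_resolving_function ?V ?E ?w"
    using local_resolving_function_uniform[of "{0..<k}" "{0..<n}"] assms by simp
  have "real n / 2 = (\<Sum>x\<in>?V. ?w x)"
    using assms by simp
  then have attained: "real n / 2 \<in> {sum f ?V | f. local_resolving_function ?V ?E f}"
    using uniform by (intro CollectI exI[of _ ?w]) simp
  have "real n / 2 \<le> sum f ?V" if "local_resolving_function ?V ?E f" for f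
    using local_resolving_function_sum_ge[OF that] assms by simp
  then show ?thesis
    unfolding ldim_f_def cart_verts_def K_verts_def
    by (intro cInf_eq_minimum[OF attained]) blast
qed

end
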